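(* Let $T>0$, let $f,h,g:[0,T]\to\mathbb{R}$ be continuous with $g_t>0$ for all $t\in[0,T]$, and let $\mathbf{m},x_T\in\mathbb{R}^d$. Define $\bar f_{s:t}=\int_s^t f_z\,dz$, $\bar f_t=\bar f_{0:t}$, $\bar h_{s:t}=\int_s^t e^{-\bar f_z}h_z\,dz$, $\bar g^2_{s:t}=\int_s^t e^{-2\bar f_z}g_z^2\,dz$, and for $\gamma\in(0,\infty)$ let $d_{t,\gamma}=\gamma^{-1}+e^{2\bar f_T}\bar g^2_{t:T}$ and $$\mathbf{u}^*_{t,\gamma}(\mathbf{x})=g_t e^{\bar f_{t:T}}\,\frac{x_T-e^{\bar f_{t:T}}\mathbf{x}-\mathbf{m}\,e^{\bar f_T}\bar h_{t:T}}{d_{t,\gamma}},\qquad t\in[0,T],\ \mathbf{x}\in\mathbb{R}^d,$$ which is the optimal feedback controller of the problem of minimizing $\int_0^T\frac12\|\mathbf{u}_{t,\gamma}\|_2^2dt+\frac\gamma2\|\mathbf{x}^u_T-x_T\|_2^2$ subject to $d\mathbf{x}_t=(f_t\mathbf{x}_t+h_t\mathbf{m}+g_t\mathbf{u}_{t,\gamma})dt$. Let $p(\mathbf{x}_T\mid\mathbf{x}_t)$ denote the transition density of the uncontrolled linear SDE $d\mathbf{x}_t=(f_t\mathbf{x}_t+h_t\mathbf{m})dt+g_t\,d\mathbf{w}_t$, with $\mathbf{w}_t$ a standard $d$-dimensional Brownian motion. Then for every $t\in[0,T)$ and $\mathbf{x}\in\mathbb{R}^d$, $$\mathbf{u}^*_{t,\infty}(\mathbf{x}):=\lim_{\gamma\to\infty}\mathbf{u}^*_{t,\gamma}(\mathbf{x})=g_t\,\nabla_{\mathbf{x}}\log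 p(x_T\mid\mathbf{x}_t=\mathbf{x}).$$ Consequently, the controlled forward SDE $d\mathbf{x}_t=(f_t\mathbf{x}_t+h_t\mathbf{m}+g_t\mathbf{u}^*_{t,\infty}(\mathbf{x}_t))dt+g_t\,d\mathbf{w}_t$ coincides with the Doob $h$-transformed SDE $d\mathbf{x}_t=[f_t\mathbf{x}_t+h_t\mathbf{m}+g_t^2\nabla_{\mathbf{x}_t}\log p(x_T\mid\mathbf{x}_t)]dt+g_t\,d\mathbf{w}_t$, and the associated reverse-time SDE $d\mathbf{x}_t=[f_t\mathbf{x}_t+h_t\mathbf{m}+g_t\mathbf{u}^*_{t,\infty}(\mathbf{x}_t)-g_t^2\nabla_{\mathbf{x}_t}\log p(\mathbf{x}_t\mid x_T)]dt+g_t\,d\tilde{\mathbf{w}}_t$ coincides with the Doob $h$-transform reverse SDE $d\mathbf{x}_t=[f_t\mathbf{x}_t+h_t\mathbf{m}+g_t^2\nabla_{\mathbf{x}_t}\log p(x_T\mid\mathbf{x}_t)-g_t^2\nabla_{\mathbf{x}_t}\log p(\mathbf{x}_t\mid x_T)]dt+g_t\,d\tilde{\mathbf{w}}_t$.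
   Context: $\tilde{\mathbf{w}}_t$ denotes a reverse-time Brownian motion and $p(\mathbf{x}_t\mid x_T)$ the conditional density of the bridge process at time $t$ given its terminal value; these terms appear identically on both sides. The Doob $h$-transform of a diffusion $d\mathbf{x}_t=\mathbf{f}(\mathbf{x}_t,t)dt+g_td\mathbf{w}_t$ toward a fixed endpoint $x_T$ is the diffusion with drift augmented by $g_t^2\nabla_{\mathbf{x}_t}\log p(x_T\mid\mathbf{x}_t)$. *)

theory Defs
  imports "HOL-Analysis.Analysis" "HOL-Probability.Distributions"
begin

definition fbar :: "(real \<Rightarrow> real) \<Rightarrow> real \<Rightarrow> real \<Rightarrow> real" where
  "fbar f s t = integral {s..t} f"

definition hbar :: "(real \<Rightarrow> real) \<Rightarrow> (real \<Rightarrow> real) \<Rightarrow> real \<Rightarrow> real \<Rightarrow> real" where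
  "hbar f h s t = integral {s..t} (\<lambda>z. exp (- fbar f 0 z) * h z)"

definition gbar2 :: "(real \<Rightarrow> real) \<Rightarrow> (real \<Rightarrow> real) \<Rightarrow> real \<Rightarrow> real \<Rightarrow> real" where
  "gbar2 f g s t = integral {s..t} (\<lambda>z. exp (- 2 * fbar f 0 z) * (g z)\<^sup>2)"

definition d_gamma :: "(real \<Rightarrow> real) \<Rightarrow> (real \<Rightarrow> real) \<Rightarrow> real \<Rightarrow> real \<Rightarrow> real \<Rightarrow> real" where
  "d_gamma f g T \<gamma> t = 1 / \<gamma> + exp (2 * fbar f 0 T) * gbar2 f g t T"

definition u_star ::
  "(real \<Rightarrow> real) \<Rightarrow> (real \<Rightarrow> real) \<Rightarrow> (real \<Rightarrow> real) \<Rightarrow> real ^ 'd \<Rightarrow> real ^ 'd \<Rightarrow> real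
    \<Rightarrow> real \<Rightarrow> real \<Rightarrow> real ^ 'd \<Rightarrow> real ^ 'd" where
  "u_star f h g m xT T \<gamma> t x =
     (g t * exp (fbar f t T) / d_gamma f g T \<gamma> t) *\<^sub>R
       (xT - exp (fbar f t T) *\<^sub>R x - (exp (fbar f 0 T) * hbar f h t T) *\<^sub>R m)"

text \<open>Transition density p(y | x_t = x) at the terminal time T of the uncontrolled linear SDE
  dx = (f x + h m) dt + g dw.  Its unique solution started at x at time t is
  x_T = e^{fbar_{t:T}} x + (int_t^T e^{fbar_{s:T}} h_s ds) m + int_t^T e^{fbar_{s:T}} g_s dw_s,
  a Gaussian with independent coordinates, mean as below and variance
  int_t^T e^{2 fbar_{s:T}} g_s^2 ds in each coordinate.\<close>
definition sde_mean ::
  "(real \<Rightarrow> real) \<Rightarrow> (real \<Rightarrow> real) \<Rightarrow> real ^ 'd \<Rightarrow> real \<Rightarrow> real \<Rightarrow> real ^ 'd \<Rightarrow> real ^ 'd" where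
  "sde_mean f h m T t x =
     exp (fbar f t T) *\<^sub>R x + integral {t..T} (\<lambda>s. exp (fbar f s T) * h s) *\<^sub>R m"

definition sde_var :: "(real \<Rightarrow> real) \<Rightarrow> (real \<Rightarrow> real) \<Rightarrow> real \<Rightarrow> real \<Rightarrow> real" where
  "sde_var f g T t = integral {t..T} (\<lambda>s. exp (2 * fbar f s T) * (g s)\<^sup>2)"

definition trans_density ::
  "(real \<Rightarrow> real) \<Rightarrow> (real \<Rightarrow> real) \<Rightarrow> (real \<Rightarrow> real) \<Rightarrow> real ^ 'd \<Rightarrow> real \<Rightarrow> real
    \<Rightarrow> real ^ 'd \<Rightarrow> real ^ 'd \<Rightarrow> real" where
  "trans_density f h g m T t x y =
     (\<Prod>i\<in>UNIV. normal_density (sde_mean f h m T t x $ i) (sqrt (sde_var f g T t)) (y $ i))"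

end

theory Submission
  imports Defs
begin

text \<open>Started at x at time t, the uncontrolled linear SDE has at time T a Gaussian law with
  independent coordinates, mean e^{f_{t:T}} x + c m and variance V = e^{2 f_T} g^2_{t:T} > 0, so the
  score of x \<mapsto> p(x_T | x) is e^{f_{t:T}} (x_T - mean) / V. Splitting f_{s:T} = f_T - f_s inside
  the defining integrals gives c = e^{f_T} h_{t:T} and d_{t,\<gamma>} = 1/\<gamma> + V, so that
  u*_{t,\<gamma>}(x) = g_t e^{f_{t:T}} (x_T - mean) / (1/\<gamma> + V), which tends to g_t times the score.\<close>

lemma fbar_split:
  assumes "f integrable_on {a..b}" "s \<in> {a..b}"
  shows "fbar f a b = fbar f a s + fbar f s b"
  using Henstock_Kurzweil_Integration.integral_combine[of a s b f] assms
  unfolding fbar_def by auto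

lemma integral_exp_fbar_mult_eq_hbar:
  assumes "f integrable_on {0..T}" "0 \<le> t"
  shows "integral {t..T} (\<lambda>s. exp (fbar f s T) * h s) = exp (fbar f 0 T) * hbar f h t T"
proof -
  have "integral {t..T} (\<lambda>s. exp (fbar f s T) * h s)
      = integral {t..T} (\<lambda>s. exp (fbar f 0 T) * (exp (- fbar f 0 s) * h s))"
  proof (rule integral_cong)
    fix s assume "s \<in> {t..T}"
    then have "fbar f 0 T = fbar f 0 s + fbar f s T" using assms by (intro fbar_split) auto
    then show "exp (fbar f s T) * h s = exp (fbar f 0 T) * (exp (- fbar f 0 s) * h s)"
      by (simp add: exp_add exp_minus)
  qed
  then show ?thesis unfolding hbar_def by simp
qed

lemma sde_var_eq_gbar2:
  assumes "f integrable_on {0..T}" "0 \<le> t"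
  shows "sde_var f g T t = exp (2 * fbar f 0 T) * gbar2 f g t T"
proof -
  have "sde_var f g T t
      = integral {t..T} (\<lambda>s. exp (2 * fbar f 0 T) * (exp (- 2 * fbar f 0 s) * (g s)\<^sup>2))"
    unfolding sde_var_def
  proof (rule integral_cong)
    fix s assume "s \<in> {t..T}"
    then have "fbar f 0 T = fbar f 0 s + fbar f s T" using assms by (intro fbar_split) auto
    then show "exp (2 * fbar f s T) * (g s)\<^sup>2
        = exp (2 * fbar f 0 T) * (exp (- 2 * fbar f 0 s) * (g s)\<^sup>2)"
      by (simp add: distrib_left exp_add exp_minus)
  qed
  then show ?thesis unfolding gbar2_def by simp
qed

lemma integral_continuous_pos:
  fixes k :: "real \<Rightarrow> real"
  assumes "a < b" "continuous_on {a..b} k" "\<And>s. s \<in> {a..b} \<Longrightarrow> k s > 0"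
  shows "integral {a..b} k > 0"
proof -
  obtain s0 where s0: "s0 \<in> {a..b}" "\<And>s. s \<in> {a..b} \<Longrightarrow> k s0 \<le> k s"
    using continuous_attains_inf[OF compact_Icc _ assms(2)] assms(1) by auto
  have "0 < (b - a) * k s0" using assms(1,3) s0(1) by simp
  also have "\<dots> = integral {a..b} (\<lambda>_. k s0)" using assms(1) by simp
  also have "\<dots> \<le> integral {a..b} k"
    using s0 assms(2) integrable_continuous_interval by (intro integral_le) auto
  finally show ?thesis .
qed

lemma sde_var_pos:
  assumes "continuous_on {0..T} f" "continuous_on {0..T} g"
    and "\<And>s. s \<in> {0..T} \<Longrightarrow> g s > 0" "0 \<le> t" "t < T"
  shows "sde_var f g T t > 0"
proof -
  have f_int: "f integrable_on {0..T}" using assms(1) by (rule integrable_continuous_interval)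
  have "continuous_on {0..T} (\<lambda>z. exp (- 2 * fbar f 0 z) * (g z)\<^sup>2)"
    unfolding fbar_def by (intro continuous_intros indefinite_integral_continuous_1 f_int assms(2))
  then have "continuous_on {t..T} (\<lambda>z. exp (- 2 * fbar f 0 z) * (g z)\<^sup>2)"
    by (rule continuous_on_subset) (use assms(4) in auto)
  moreover have "exp (- 2 * fbar f 0 s) * (g s)\<^sup>2 > 0" if "s \<in> {t..T}" for s
    using assms(3)[of s] assms(4) that by simp
  ultimately have "gbar2 f g t T > 0"
    unfolding gbar2_def using assms(5) by (intro integral_continuous_pos)
  then show ?thesis using sde_var_eq_gbar2[OF f_int assms(4)] by simp
qed

lemma ln_prod_normal_density:
  fixes \<mu> z :: "real ^ 'n"
  assumes "\<sigma> > 0"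
  shows "ln (\<Prod>i\<in>UNIV. normal_density (\<mu> $ i) \<sigma> (z $ i))
    = - ((z - \<mu>) \<bullet> (z - \<mu>)) / (2 * \<sigma>\<^sup>2) - CARD('n) * ln (sqrt (2 * pi * \<sigma>\<^sup>2))"
proof -
  have "ln (\<Prod>i\<in>UNIV. normal_density (\<mu> $ i) \<sigma> (z $ i))
      = (\<Sum>i\<in>UNIV. ln (normal_density (\<mu> $ i) \<sigma> (z $ i)))"
    using normal_density_pos[OF assms] by (intro ln_prod) (auto simp: order_less_imp_not_eq2)
  also have "\<dots> = (\<Sum>i\<in>UNIV. - (z $ i - \<mu> $ i)\<^sup>2 / (2 * \<sigma>\<^sup>2) - ln (sqrt (2 * pi * \<sigma>\<^sup>2)))"
    using assms by (intro sum.cong) (simp_all add: normal_density_def ln_mult ln_div)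
  also have "\<dots> = - ((z - \<mu>) \<bullet> (z - \<mu>)) / (2 * \<sigma>\<^sup>2) - CARD('n) * ln (sqrt (2 * pi * \<sigma>\<^sup>2))"
    by (simp add: inner_vec_def power2_eq_square sum_subtractf sum_negf sum_divide_distrib[symmetric])
  finally show ?thesis .
qed

lemma has_derivative_ln_normal_density_affine:
  fixes b z :: "real ^ 'n"
  assumes "\<sigma> > 0"
  shows "((\<lambda>y. ln (\<Prod>i\<in>UNIV. normal_density ((a *\<^sub>R y + b) $ i) \<sigma> (z $ i)))
    has_derivative (\<lambda>v. ((a / \<sigma>\<^sup>2) *\<^sub>R (z - (a *\<^sub>R x + b))) \<bullet> v)) (at x)"
proof -
  let ?r = "\<lambda>y. z - (a *\<^sub>R y + b)"
  let ?c = "- 1 / (2 * \<sigma>\<^sup>2)" and ?L = "CARD('n) * ln (sqrt (2 * pi * \<sigma>\<^sup>2))"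
  have "(?r has_derivative (\<lambda>v. 0 - (a *\<^sub>R v + 0))) (at x)"
    by (intro has_derivative_diff has_derivative_add has_derivative_const
        has_derivative_scaleR_right has_derivative_ident)
  then have r: "(?r has_derivative (\<lambda>v. - (a *\<^sub>R v))) (at x)"
    by simp
  have "((\<lambda>y. ?r y \<bullet> ?r y) has_derivative (\<lambda>v. ?r x \<bullet> - (a *\<^sub>R v) + - (a *\<^sub>R v) \<bullet> ?r x)) (at x)"
    by (rule has_derivative_inner[OF r r])
  then have "((\<lambda>y. ?c * (?r y \<bullet> ?r y) - ?L)
      has_derivative (\<lambda>v. ?c * (?r x \<bullet> - (a *\<^sub>R v) + - (a *\<^sub>R v) \<bullet> ?r x) - 0)) (at x)"
    by (intro has_derivative_diff has_derivative_const has_derivative_mult_right)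
  moreover have "(\<lambda>y. ln (\<Prod>i\<in>UNIV. normal_density ((a *\<^sub>R y + b) $ i) \<sigma> (z $ i)))
      = (\<lambda>y. ?c * (?r y \<bullet> ?r y) - ?L)"
    by (intro ext, subst ln_prod_normal_density[OF assms]) simp
  moreover have "(\<lambda>v. ?c * (?r x \<bullet> - (a *\<^sub>R v) + - (a *\<^sub>R v) \<bullet> ?r x) - 0)
      = (\<lambda>v. ((a / \<sigma>\<^sup>2) *\<^sub>R ?r x) \<bullet> v)"
    by (simp add: fun_eq_iff inner_commute[of "?r x"])
  ultimately show ?thesis by simp
qed

lemma has_derivative_ln_trans_density:
  assumes "sde_var f g T t > 0"
  shows "((\<lambda>y. ln (trans_density f h g m T t y z)) has_derivative
    (\<lambda>v. ((exp (fbar f t T) / sde_var f g T t) *\<^sub>R (z - sde_mean f h m T t x)) \<bullet> v)) (at x)"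
  using has_derivative_ln_normal_density_affine[of "sqrt (sde_var f g T t)" "exp (fbar f t T)"
      "integral {t..T} (\<lambda>s. exp (fbar f s T) * h s) *\<^sub>R m" z x] assms
  unfolding trans_density_def sde_mean_def by (simp add: less_imp_le)

lemma u_star_eq_sde_mean_var:
  assumes "f integrable_on {0..T}" "0 \<le> t"
  shows "u_star f h g m xT T \<gamma> t x
    = (g t * exp (fbar f t T) / (1 / \<gamma> + sde_var f g T t)) *\<^sub>R (xT - sde_mean f h m T t x)"
  unfolding u_star_def d_gamma_def sde_mean_def
    sde_var_eq_gbar2[OF assms] integral_exp_fbar_mult_eq_hbar[OF assms]
  by (simp add: diff_diff_eq)

lemma u_star_tendsto:
  assumes "f integrable_on {0..T}" "0 \<le> t" "sde_var f g T t > 0"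
  shows "((\<lambda>\<gamma>. u_star f h g m xT T \<gamma> t x) \<longlongrightarrow>
    (g t * exp (fbar f t T) / sde_var f g T t) *\<^sub>R (xT - sde_mean f h m T t x)) at_top"
proof -
  have "((\<lambda>\<gamma>::real. 1 / \<gamma>) \<longlongrightarrow> 0) at_top"
    by (intro tendsto_divide_0[OF tendsto_const] filterlim_at_top_imp_at_infinity filterlim_ident)
  then have "((\<lambda>\<gamma>. (g t * exp (fbar f t T) / (1 / \<gamma> + sde_var f g T t)) *\<^sub>R (xT - sde_mean f h m T t x))
      \<longlongrightarrow> (g t * exp (fbar f t T) / (0 + sde_var f g T t)) *\<^sub>R (xT - sde_mean f h m T t x)) at_top"
    using assms(3) by (intro tendsto_intros) auto
  then show ?thesis using assms(1,2) by (simp add: u_star_eq_sde_mean_var)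
qed

theorem theorem4p2:
  fixes f h g :: "real \<Rightarrow> real" and T t :: real and m xT x :: "real ^ 'd"
  assumes "T > 0"
    and "continuous_on {0..T} f" and "continuous_on {0..T} h" and "continuous_on {0..T} g"
    and "\<And>s. s \<in> {0..T} \<Longrightarrow> g s > 0"
    and "t \<in> {0..<T}"
  shows "\<exists>G :: real ^ 'd.
           ((\<lambda>y. ln (trans_density f h g m T t y xT)) has_derivative (\<lambda>v. G \<bullet> v)) (at x)
         \<and> ((\<lambda>\<gamma>. u_star f h g m xT T \<gamma> t x) \<longlongrightarrow> g t *\<^sub>R G) at_top
         \<and> f t *\<^sub>R x + h t *\<^sub>R m + g t *\<^sub>R Lim at_top (\<lambda>\<gamma>. u_star f h g m xT T \<gamma> t x)
             = f t *\<^sub>R x + h t *\<^sub>R m + (g t)\<^sup>2 *\<^sub>R G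
         \<and> (\<forall>S :: real ^ 'd.
              f t *\<^sub>R x + h t *\<^sub>R m + g t *\<^sub>R Lim at_top (\<lambda>\<gamma>. u_star f h g m xT T \<gamma> t x)
                - (g t)\<^sup>2 *\<^sub>R S
              = f t *\<^sub>R x + h t *\<^sub>R m + (g t)\<^sup>2 *\<^sub>R G - (g t)\<^sup>2 *\<^sub>R S)"
proof -
  have t: "0 \<le> t" "t < T" using assms(6) by auto
  have f_int: "f integrable_on {0..T}" using assms(2) by (rule integrable_continuous_interval)
  have V_pos: "sde_var f g T t > 0" using assms(2,4,5) t by (rule sde_var_pos)
  define G where "G = (exp (fbar f t T) / sde_var f g T t) *\<^sub>R (xT - sde_mean f h m T t x)"
  have score: "((\<lambda>y. ln (trans_density f h g m T t y xT)) has_derivative (\<lambda>v. G \<bullet> v)) (at x)"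
    unfolding G_def using V_pos by (rule has_derivative_ln_trans_density)
  have u_lim: "((\<lambda>\<gamma>. u_star f h g m xT T \<gamma> t x) \<longlongrightarrow> g t *\<^sub>R G) at_top"
    using u_star_tendsto[OF f_int t(1) V_pos] by (simp add: G_def)
  then have "Lim at_top (\<lambda>\<gamma>. u_star f h g m xT T \<gamma> t x) = g t *\<^sub>R G"
    by (intro tendsto_Lim) auto
  then show ?thesis
    using score u_lim by (intro exI[of _ G]) (simp add: power2_eq_square)
qed

end
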